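(* Let $F$ be a probability distribution on the non-negative integers with bounded support, write $p_j=F(\{j\})$ and $u=\max\{j:p_j>0\}$. In the Coin Toss (CT) model with degree distribution $F$, the total length $T$ of all edges at the origin satisfies $\mathbb{E}[T]=u^2$.
   Context: CT model: independently for each $i\in\mathbb{Z}$ let $D_i\sim F$, and attach $D_i$ stubs $s_{i,1},\dots,s_{i,D_i}$ to vertex $i$. For $j\ge1$ let $\Gamma_j=\{i\in\mathbb{Z}:D_i\ge j\}$; the stubs $s_{i,j}$, $i\in\Gamma_j$, form level $j$. For each level $j$ separately (with independent fair coin tosses, independent of the degrees) the level-$j$ stubs are given directions so that along $\Gamma_j$ (in increasing order) the directions alternate right, left, right, left, \dots, the direction of the stub at the first vertex $i\ge 0$ of $\Gamma_j$ being right or left according to a fair coin. A level-$j$ stub at $i$ pointing right (left) is joined to the level-$j$ stub at the $(2j-1)$-th vertex of $\Gamma_j$ to the right (left) of $i$ (which points in the opposite direction), producing an edge. The length of an edge $\{i,k\}$ is $|i-k|$, and $T$ is the total length of all edges at vertex $0$. *)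

theory Defs
  imports "HOL-Probability.Probability"
begin

text \<open>Coin Toss (CT) model. A sample point is a pair (D, c): D i is the degree of
  vertex i (i.i.d. with law F) and c j is the fair coin of level j (True = right).\<close>

definition CT_space :: "nat pmf \<Rightarrow> ((int \<Rightarrow> nat) \<times> (nat \<Rightarrow> bool)) measure" where
  "CT_space F = (PiM UNIV (\<lambda>_::int. measure_pmf F)) \<Otimes>\<^sub>M
                 (PiM UNIV (\<lambda>_::nat. measure_pmf (bernoulli_pmf (1/2))))"

definition Gamma :: "(int \<Rightarrow> nat) \<Rightarrow> nat \<Rightarrow> int set" where
  "Gamma D j = {i. j \<le> D i}"

text \<open>The n-th vertex of S strictly to the right / left of i (default i if it does not exist).\<close>
definition nth_right :: "int set \<Rightarrow> int \<Rightarrow> nat \<Rightarrow> int" where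
  "nth_right S i n =
     (if \<exists>k. k \<in> S \<and> i < k \<and> card {m \<in> S. i < m \<and> m \<le> k} = n
      then (THE k. k \<in> S \<and> i < k \<and> card {m \<in> S. i < m \<and> m \<le> k} = n) else i)"

definition nth_left :: "int set \<Rightarrow> int \<Rightarrow> nat \<Rightarrow> int" where
  "nth_left S i n =
     (if \<exists>k. k \<in> S \<and> k < i \<and> card {m \<in> S. k \<le> m \<and> m < i} = n
      then (THE k. k \<in> S \<and> k < i \<and> card {m \<in> S. k \<le> m \<and> m < i} = n) else i)"

definition first_nonneg :: "int set \<Rightarrow> int" where
  "first_nonneg S = (if \<exists>i\<in>S. 0 \<le> i then (LEAST i. i \<in> S \<and> 0 \<le> i) else 0)"

text \<open>Position of i in S (in increasing order), the first vertex \<ge> 0 having position 0.\<close>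
definition stub_index :: "int set \<Rightarrow> int \<Rightarrow> int" where
  "stub_index S i =
     (let g = first_nonneg S in
      if g \<le> i then int (card {m \<in> S. g \<le> m \<and> m < i})
      else - int (card {m \<in> S. i \<le> m \<and> m < g}))"

text \<open>Directions alternate along Gamma_j; the stub at the first vertex \<ge> 0 points right iff c j.\<close>
definition points_right :: "(int \<Rightarrow> nat) \<Rightarrow> (nat \<Rightarrow> bool) \<Rightarrow> int \<Rightarrow> nat \<Rightarrow> bool" where
  "points_right D c i j = (even (stub_index (Gamma D j) i) \<longleftrightarrow> c j)"

definition partner :: "(int \<Rightarrow> nat) \<Rightarrow> (nat \<Rightarrow> bool) \<Rightarrow> int \<Rightarrow> nat \<Rightarrow> int" where
  "partner D c i j =
     (if points_right D c i j then nth_right (Gamma D j) i (2*j - 1)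
      else nth_left (Gamma D j) i (2*j - 1))"

definition CT_T :: "(int \<Rightarrow> nat) \<times> (nat \<Rightarrow> bool) \<Rightarrow> nat" where
  "CT_T \<omega> = (\<Sum>j\<in>{1..fst \<omega> 0}. nat \<bar>partner (fst \<omega>) (snd \<omega>) 0 j - 0\<bar>)"

end

theory Submission
  imports Defs
begin

text \<open>
  Only the levels j \<le> D 0 give an edge at the origin. If the level-j stub points right, the edge
  length is the number of k \<ge> 0 for which fewer than 2j - 1 of the vertices 1, ..., k lie in
  level j; the left case is the mirror image. Given D 0 \<ge> j, an event of probability
  q = P(D \<ge> j), the number of such vertices is Bin(k, q), and the sum over k of q P(Bin(k, q) < n)
  equals n for every q > 0. Hence level j contributes 2j - 1 to E[T] whatever F is, and the levels
  1, ..., u add up to u^2.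
\<close>

section \<open>Counting vertices to the right of the origin\<close>

lemma counter_first_hit:
  fixes c :: "nat \<Rightarrow> nat"
  assumes c0: "c 0 = 0" and cS: "\<And>k. c (Suc k) = c k + (if P (Suc k) then 1 else 0)"
    and n: "1 \<le> n" and reached: "n \<le> c k0"
  obtains K where "0 < K" "P K" "c K = n" "{k. c k < n} = {..<K}"
proof -
  define K where "K = (LEAST k. n \<le> c k)"
  have mono: "mono c"
    by (rule mono_iff_le_Suc[THEN iffD2]) (simp add: cS)
  have "n \<le> c K"
    unfolding K_def using reached by (rule LeastI)
  have below: "{k. c k < n} = {..<K}"
  proof (intro set_eqI iffI)
    fix k assume "k \<in> {k. c k < n}"
    then show "k \<in> {..<K}"
      using monoD[OF mono, of K k] \<open>n \<le> c K\<close> by (metis lessThan_iff linorder_not_le mem_Collect_eq order.trans)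
  next
    fix k assume "k \<in> {..<K}"
    then show "k \<in> {k. c k < n}"
      unfolding K_def by (auto dest: not_less_Least)
  qed
  have "K \<noteq> 0"
  proof
    assume "K = 0"
    with \<open>n \<le> c K\<close> c0 n show False by simp
  qed
  then obtain K0 where K0: "K = Suc K0"
    using not0_implies_Suc by blast
  have "c K0 < n"
    using below K0 by auto
  then have "P K" "c K = n"
    using \<open>n \<le> c K\<close> cS[of K0] K0 by (auto split: if_splits)
  with \<open>K \<noteq> 0\<close> below show thesis
    using that by blast
qed

definition count_right :: "int set \<Rightarrow> nat \<Rightarrow> nat" where
  "count_right G k = card {m \<in> G. 0 < m \<and> m \<le> int k}"

lemma count_right_0 [simp]: "count_right G 0 = 0"
proof -
  have "{m \<in> G. 0 < m \<and> m \<le> int 0} = {}" by auto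
  then show ?thesis unfolding count_right_def by simp
qed

lemma count_right_Suc:
  "count_right G (Suc k) = count_right G k + (if int (Suc k) \<in> G then 1 else 0)"
proof -
  have "{m \<in> G. 0 < m \<and> m \<le> int (Suc k)} =
      (if int (Suc k) \<in> G then insert (int (Suc k)) else id) {m \<in> G. 0 < m \<and> m \<le> int k}"
    by (auto simp: order_le_less)
  moreover have "finite {m \<in> G. 0 < m \<and> m \<le> int k}"
    by (rule finite_subset[of _ "{0..int k}"]) auto
  ultimately show ?thesis
    unfolding count_right_def by (simp add: card_insert_if)
qed

lemma card_right_segment_strict_mono:
  fixes G :: "int set"
  assumes "0 < a" "a < b" "b \<in> G"
  shows "card {m \<in> G. 0 < m \<and> m \<le> a} < card {m \<in> G. 0 < m \<and> m \<le> b}"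
proof (rule psubset_card_mono)
  show "finite {m \<in> G. 0 < m \<and> m \<le> b}"
    by (rule finite_subset[of _ "{0..b}"]) auto
  show "{m \<in> G. 0 < m \<and> m \<le> a} \<subset> {m \<in> G. 0 < m \<and> m \<le> b}"
  proof (rule psubsetI)
    show "{m \<in> G. 0 < m \<and> m \<le> a} \<subseteq> {m \<in> G. 0 < m \<and> m \<le> b}"
      using assms by auto
    have "b \<in> {m \<in> G. 0 < m \<and> m \<le> b}" "b \<notin> {m \<in> G. 0 < m \<and> m \<le> a}"
      using assms by auto
    then show "{m \<in> G. 0 < m \<and> m \<le> a} \<noteq> {m \<in> G. 0 < m \<and> m \<le> b}"
      by blast
  qed
qed

lemma card_right_segment_inj:
  fixes G :: "int set"
  assumes "k \<in> G" "k' \<in> G" "0 < k" "0 < k'"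
    and "card {m \<in> G. 0 < m \<and> m \<le> k} = card {m \<in> G. 0 < m \<and> m \<le> k'}"
  shows "k = k'"
proof (rule ccontr)
  assume "k \<noteq> k'"
  then consider "k < k'" | "k' < k" by linarith
  then show False
    using card_right_segment_strict_mono[of k k' G] card_right_segment_strict_mono[of k' k G] assms
    by cases simp_all
qed

lemma reflect_right_segment:
  fixes G :: "int set"
  shows "{m \<in> uminus ` G. 0 < m \<and> m \<le> - k} = uminus ` {m \<in> G. k \<le> m \<and> m < 0}"
proof (intro set_eqI iffI)
  fix x assume "x \<in> {m \<in> uminus ` G. 0 < m \<and> m \<le> - k}"
  then show "x \<in> uminus ` {m \<in> G. k \<le> m \<and> m < 0}"
    by (intro image_eqI[of _ uminus "- x"]) auto
qed auto

lemma nth_left_0_eq_reflect: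
  fixes G :: "int set"
  shows "nth_left G 0 n = - nth_right (uminus ` G) 0 n"
proof -
  define R where "R k \<longleftrightarrow> k \<in> uminus ` G \<and> 0 < k \<and> card {m \<in> uminus ` G. 0 < m \<and> m \<le> k} = n" for k
  define L where "L k \<longleftrightarrow> k \<in> G \<and> k < 0 \<and> card {m \<in> G. k \<le> m \<and> m < 0} = n" for k
  have L_iff: "L k \<longleftrightarrow> R (- k)" for k
    unfolding L_def R_def reflect_right_segment by (simp add: card_image inj_image_mem_iff)
  have R_unique: "k = k'" if "R k" "R k'" for k k'
    using that unfolding R_def by (intro card_right_segment_inj[of k "uminus ` G" k']) simp_all
  show ?thesis
  proof (cases "\<exists>k. R k")
    case True
    then obtain k where k: "R k" ..
    have "(THE k. R k) = k"
      using k by (rule the_equality) (rule R_unique[OF _ k])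
    moreover have "(THE k. L k) = - k"
    proof (rule the_equality)
      show "L (- k)"
        using k by (simp add: L_iff)
      show "x = - k" if "L x" for x
        using R_unique[of "- x" k] that k by (simp add: L_iff)
    qed
    moreover have "\<exists>k. L k"
      using k L_iff[of "- k"] by auto
    ultimately show ?thesis
      using True unfolding nth_left_def nth_right_def L_def[symmetric] R_def[symmetric] by simp
  next
    case False
    then have "\<nexists>k. L k"
      by (simp add: L_iff)
    with False show ?thesis
      unfolding nth_left_def nth_right_def L_def[symmetric] R_def[symmetric] by simp
  qed
qed

lemma nth_right_0_eq_card:
  assumes n: "1 \<le> n" and reached: "n \<le> count_right G k0"
  shows "nth_right G 0 n = int (card {k. count_right G k < n})"
proof -
  obtain K where K: "0 < K" "int K \<in> G" "count_right G K = n"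
      and below: "{k. count_right G k < n} = {..<K}"
    using counter_first_hit[of "count_right G" "\<lambda>k. int k \<in> G", OF count_right_0 count_right_Suc n reached]
    by blast
  let ?R = "\<lambda>k. k \<in> G \<and> 0 < k \<and> card {m \<in> G. 0 < m \<and> m \<le> k} = n"
  have "?R (int K)"
    using K unfolding count_right_def by simp
  then have "\<exists>k. ?R k" by blast
  then have "nth_right G 0 n = (THE k. ?R k)"
    unfolding nth_right_def by (rule if_P)
  also have "\<dots> = int K"
  proof (rule the_equality)
    show "?R (int K)" by fact
    show "k = int K" if "?R k" for k
      using that \<open>?R (int K)\<close> by (intro card_right_segment_inj[of k G "int K"]) auto
  qed
  finally show ?thesis
    using below by simp
qed

text \<open>Unlike nth_right, which falls back to the starting point, this distance is infinite
  when G has fewer than n positive elements.\<close>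

definition nth_right_dist :: "int set \<Rightarrow> nat \<Rightarrow> ennreal" where
  "nth_right_dist G n = (\<Sum>k. of_bool (count_right G k < n))"

lemma nth_right_dist_eq:
  assumes n: "1 \<le> n" and finite_dist: "nth_right_dist G n \<noteq> \<infinity>"
  shows "nth_right_dist G n = of_nat (nat \<bar>nth_right G 0 n\<bar>)"
proof -
  have "\<exists>k0. n \<le> count_right G k0"
  proof (rule ccontr)
    assume "\<nexists>k0. n \<le> count_right G k0"
    then have "nth_right_dist G n = (\<Sum>k::nat. 1)"
      unfolding nth_right_dist_def by (simp add: not_le)
    also have "\<dots> = \<infinity>"
      by (simp add: suminf_eq_SUP ennreal_SUP_of_nat_eq_top)
    finally show False
      using finite_dist by simp
  qed
  then obtain k0 where reached: "n \<le> count_right G k0" ..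
  then obtain K where below: "{k. count_right G k < n} = {..<K}"
    using counter_first_hit[of "count_right G" "\<lambda>k. int k \<in> G", OF count_right_0 count_right_Suc n]
    by metis
  have "nth_right_dist G n = (\<Sum>k<K. of_bool (count_right G k < n))"
    unfolding nth_right_dist_def using below by (intro suminf_finite) auto
  also have "\<dots> = of_nat K"
    using below by (simp add: Int_absorb2 subset_eq)
  finally show ?thesis
    using nth_right_0_eq_card[OF n reached] below by simp
qed

section \<open>Binomial counts in a product of pmfs\<close>

lemma sets_PiM_pmf_cylinder:
  fixes F :: "'a pmf" and J :: "'i set"
  assumes "finite J"
  shows "{D \<in> space (PiM UNIV (\<lambda>_::'i. measure_pmf F)). \<forall>i\<in>J. D i \<in> X i}
    \<in> sets (PiM UNIV (\<lambda>_::'i. measure_pmf F))"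
proof (rule sets.sets_Collect_finite_All[OF _ assms])
  fix i
  show "{D \<in> space (PiM UNIV (\<lambda>_::'i. measure_pmf F)). D i \<in> X i}
      \<in> sets (PiM UNIV (\<lambda>_::'i. measure_pmf F))"
    using measurable_sets[OF measurable_component_singleton[of i UNIV "\<lambda>_. measure_pmf F"], of "X i"]
    by (simp add: vimage_def Int_def conj_commute)
qed

lemma sets_PiM_card_filter:
  fixes S :: "'i set" and A :: "'a set" and F :: "'a pmf"
  assumes "finite S"
  shows "{D. P (card {i \<in> S. D i \<in> A})} \<in> sets (PiM UNIV (\<lambda>_::'i. measure_pmf F))"
proof -
  let ?M = "PiM UNIV (\<lambda>_::'i. measure_pmf F)"
  define Z where "Z B = {D \<in> space ?M. \<forall>i\<in>S. D i \<in> (if i \<in> B then A else - A)}" for B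
  have "Z B \<in> sets ?M" for B
    unfolding Z_def using assms by (rule sets_PiM_pmf_cylinder)
  moreover have "finite {B. B \<subseteq> S \<and> P (card B)}"
    using assms by (rule finite_subset[rotated, OF finite_Pow_iff[THEN iffD2]]) auto
  moreover have "{D. P (card {i \<in> S. D i \<in> A})} = (\<Union>B\<in>{B. B \<subseteq> S \<and> P (card B)}. Z B)"
  proof (intro set_eqI iffI)
    fix D assume "D \<in> {D. P (card {i \<in> S. D i \<in> A})}"
    then show "D \<in> (\<Union>B\<in>{B. B \<subseteq> S \<and> P (card B)}. Z B)"
      by (intro UN_I[of "{i \<in> S. D i \<in> A}"]) (auto simp: Z_def space_PiM)
  next
    fix D assume "D \<in> (\<Union>B\<in>{B. B \<subseteq> S \<and> P (card B)}. Z B)"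
    then obtain B where "B \<subseteq> S" "P (card B)" "D \<in> Z B" by blast
    moreover from this have "B = {i \<in> S. D i \<in> A}"
      unfolding Z_def by (auto split: if_splits)
    ultimately show "D \<in> {D. P (card {i \<in> S. D i \<in> A})}" by simp
  qed
  ultimately show ?thesis
    by (metis (no_types, lifting) sets.finite_UN)
qed

lemma borel_measurable_indicator_component:
  "(\<lambda>D. indicator X (D i) :: ennreal) \<in> borel_measurable (PiM UNIV (\<lambda>_::'i. measure_pmf F))"
  by (rule measurable_compose[OF measurable_component_singleton]) simp_all

lemma borel_measurable_suminf_card_less:
  fixes S :: "nat \<Rightarrow> 'i set" and F :: "'a pmf"
  assumes "\<And>k. finite (S k)"
  shows "(\<lambda>D. \<Sum>k. of_bool (card {i \<in> S k. D i \<in> A} < n) :: ennreal)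
    \<in> borel_measurable (PiM UNIV (\<lambda>_::'i. measure_pmf F))"
proof (rule borel_measurable_suminf_order)
  fix k
  have "(\<lambda>D. of_bool (card {i \<in> S k. D i \<in> A} < n) :: ennreal) =
      indicator {D. card {i \<in> S k. D i \<in> A} < n}"
    by (simp add: fun_eq_iff indicator_def)
  then show "(\<lambda>D. of_bool (card {i \<in> S k. D i \<in> A} < n) :: ennreal)
      \<in> borel_measurable (PiM UNIV (\<lambda>_::'i. measure_pmf F))"
    using borel_measurable_indicator[OF sets_PiM_card_filter[OF assms, of "\<lambda>c. c < n"]] by simp
qed

lemma sum_subsets_by_card:
  fixes f :: "nat \<Rightarrow> 'a :: comm_semiring_1"
  assumes "finite S"
  shows "(\<Sum>B | B \<subseteq> S \<and> card B < n. f (card B)) = (\<Sum>m<n. of_nat (card S choose m) * f m)"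
proof -
  have "finite {B. B \<subseteq> S \<and> card B < n}"
    using assms by (rule finite_subset[rotated, OF finite_Pow_iff[THEN iffD2]]) auto
  then have "(\<Sum>B | B \<subseteq> S \<and> card B < n. f (card B)) =
      (\<Sum>m<n. \<Sum>B | B \<in> {B. B \<subseteq> S \<and> card B < n} \<and> card B = m. f (card B))"
    by (intro sum.group[symmetric]) auto
  also have "\<dots> = (\<Sum>m<n. \<Sum>B | B \<subseteq> S \<and> card B = m. f m)"
    by (intro sum.cong) auto
  also have "\<dots> = (\<Sum>m<n. of_nat (card S choose m) * f m)"
    using n_subsets[OF assms] by simp
  finally show ?thesis .
qed

lemma emeasure_PiM_pmf_pattern:
  fixes F :: "'a pmf" and J B :: "'i set"
  assumes "finite J"
  shows "emeasure (PiM UNIV (\<lambda>_::'i. measure_pmf F))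
      {D \<in> space (PiM UNIV (\<lambda>_::'i. measure_pmf F)). \<forall>i\<in>J. D i \<in> (if i \<in> B then A else - A)}
    = ennreal (measure F A ^ card (J \<inter> B) * (1 - measure F A) ^ card (J - B))"
proof -
  let ?q = "measure F A"
  interpret product_prob_space "\<lambda>_::'i. measure_pmf F" UNIV
    by unfold_locales
  have "emeasure (PiM UNIV (\<lambda>_::'i. measure_pmf F))
      {D \<in> space (PiM UNIV (\<lambda>_::'i. measure_pmf F)). \<forall>i\<in>J. D i \<in> (if i \<in> B then A else - A)}
      = (\<Prod>i\<in>J. emeasure F (if i \<in> B then A else - A))"
    using assms by (intro emeasure_PiM_Collect) auto
  also have "\<dots> = (\<Prod>i\<in>J. ennreal (if i \<in> B then ?q else 1 - ?q))"
    using measure_pmf.prob_compl[of A F]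
    by (intro prod.cong refl) (simp add: measure_pmf.emeasure_eq_measure Compl_eq_Diff_UNIV)
  also have "\<dots> = ennreal (\<Prod>i\<in>J. if i \<in> B then ?q else 1 - ?q)"
    by (intro prod_ennreal) auto
  also have "(\<Prod>i\<in>J. if i \<in> B then ?q else 1 - ?q) = ?q ^ card (J \<inter> B) * (1 - ?q) ^ card (J - B)"
    using assms by (simp add: prod.If_cases Diff_eq)
  finally show ?thesis .
qed

lemma emeasure_PiM_binomial_less:
  fixes F :: "'a pmf" and S :: "'i set" and A :: "'a set"
  assumes S: "finite S" "i0 \<notin> S"
  defines "q \<equiv> measure F A"
  shows "emeasure (PiM UNIV (\<lambda>_::'i. measure_pmf F)) {D. D i0 \<in> A \<and> card {i \<in> S. D i \<in> A} < n}
    = ennreal (\<Sum>m<n. real (card S choose m) * q ^ Suc m * (1 - q) ^ (card S - m))"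
proof -
  let ?M = "PiM UNIV (\<lambda>_::'i. measure_pmf F)"
  define Ev where
    "Ev B = {D \<in> space ?M. \<forall>i\<in>insert i0 S. D i \<in> (if i \<in> insert i0 B then A else - A)}" for B
  define Bs where "Bs = {B. B \<subseteq> S \<and> card B < n}"
  have "finite Bs"
    unfolding Bs_def using S(1) by (rule finite_subset[rotated, OF finite_Pow_iff[THEN iffD2]]) auto
  have Ev_iff: "D \<in> Ev B \<longleftrightarrow> D i0 \<in> A \<and> B = {i \<in> S. D i \<in> A}" if "B \<subseteq> S" for B D
    using that S(2) unfolding Ev_def by (auto simp: space_PiM split: if_splits)
  have "disjoint_family_on Ev Bs"
    unfolding disjoint_family_on_def
  proof (intro ballI impI)
    fix B B' assume "B \<in> Bs" "B' \<in> Bs" "B \<noteq> B'"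
    then show "Ev B \<inter> Ev B' = {}"
      using Ev_iff unfolding Bs_def by (metis (no_types, lifting) disjoint_iff mem_Collect_eq)
  qed
  have event_eq: "{D. D i0 \<in> A \<and> card {i \<in> S. D i \<in> A} < n} = (\<Union>B\<in>Bs. Ev B)"
  proof (intro set_eqI iffI)
    fix D assume "D \<in> {D. D i0 \<in> A \<and> card {i \<in> S. D i \<in> A} < n}"
    then show "D \<in> (\<Union>B\<in>Bs. Ev B)"
      using Ev_iff[of "{i \<in> S. D i \<in> A}" D] unfolding Bs_def by blast
  next
    fix D assume "D \<in> (\<Union>B\<in>Bs. Ev B)"
    then obtain B where "B \<in> Bs" "D \<in> Ev B" by blast
    then show "D \<in> {D. D i0 \<in> A \<and> card {i \<in> S. D i \<in> A} < n}"
      using Ev_iff[of B D] unfolding Bs_def by simp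
  qed
  have Ev_sets: "Ev B \<in> sets ?M" for B
    unfolding Ev_def using S(1) by (intro sets_PiM_pmf_cylinder) simp
  have Ev_prob: "emeasure ?M (Ev B) = ennreal (q ^ Suc (card B) * (1 - q) ^ (card S - card B))"
    if "B \<subseteq> S" for B
  proof -
    have "card (insert i0 S \<inter> insert i0 B) = Suc (card B)"
      using that S by (simp add: Int_absorb1 finite_subset subset_insertI2 insert_absorb2)
        (metis card_insert_disjoint finite_subset subsetD)
    moreover have "card (insert i0 S - insert i0 B) = card S - card B"
      using that S by (simp add: card_Diff_subset finite_subset)
    ultimately show ?thesis
      unfolding Ev_def q_def using S(1) by (simp only: emeasure_PiM_pmf_pattern finite_insert)
  qed
  have "emeasure ?M {D. D i0 \<in> A \<and> card {i \<in> S. D i \<in> A} < n} = (\<Sum>B\<in>Bs. emeasure ?M (Ev B))"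
    unfolding event_eq using \<open>finite Bs\<close> \<open>disjoint_family_on Ev Bs\<close> Ev_sets
    by (intro sum_emeasure[symmetric]) auto
  also have "\<dots> = ennreal (\<Sum>B\<in>Bs. q ^ Suc (card B) * (1 - q) ^ (card S - card B))"
    using Ev_prob unfolding Bs_def by (simp add: q_def sum_ennreal)
  also have "(\<Sum>B\<in>Bs. q ^ Suc (card B) * (1 - q) ^ (card S - card B)) =
      (\<Sum>m<n. real (card S choose m) * q ^ Suc m * (1 - q) ^ (card S - m))"
    unfolding Bs_def using sum_subsets_by_card[OF S(1), where f = "\<lambda>m. q ^ Suc m * (1 - q) ^ (card S - m)"]
    by (simp only: mult.assoc)
  finally show ?thesis .
qed

lemma negative_binomial_sums:
  fixes x :: real
  assumes "0 \<le> x" "x < 1"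
  shows "(\<lambda>k. real (k choose m) * x ^ (k - m)) sums (1 / (1 - x) ^ Suc m)"
proof (induction m)
  case 0
  then show ?case
    using geometric_sums[of x] assms by simp
next
  case (Suc m)
  let ?a = "\<lambda>k. real (k choose m) * x ^ (k - m)"
  have "summable (\<lambda>k. norm (?a k))"
    using Suc.IH assms by (simp add: sums_summable)
  moreover have "summable (\<lambda>k. norm (x ^ k))"
    using assms by (simp add: summable_geometric)
  ultimately have "(\<lambda>k. \<Sum>i\<le>k. ?a i * x ^ (k - i)) sums ((\<Sum>k. ?a k) * (\<Sum>k. x ^ k))"
    by (rule Cauchy_product_sums)
  moreover have "(\<Sum>k. ?a k) * (\<Sum>k. x ^ k) = 1 / (1 - x) ^ Suc (Suc m)"
    using Suc.IH geometric_sums[of x] assms by (simp add: sums_iff)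
  moreover have "(\<Sum>i\<le>k. ?a i * x ^ (k - i)) = real (Suc k choose Suc m) * x ^ (Suc k - Suc m)" for k
  proof -
    have "(\<Sum>i\<le>k. ?a i * x ^ (k - i)) = (\<Sum>i\<le>k. real (i choose m) * x ^ (k - m))"
    proof (rule sum.cong[OF refl])
      fix i assume "i \<in> {..k}"
      then show "?a i * x ^ (k - i) = real (i choose m) * x ^ (k - m)"
        by (cases "m \<le> i") (simp_all add: mult.assoc power_add[symmetric])
    qed
    also have "\<dots> = real (Suc k choose Suc m) * x ^ (Suc k - Suc m)"
      by (simp add: sum_distrib_right[symmetric] sum_choose_upper flip: of_nat_sum)
    finally show ?thesis .
  qed
  ultimately have "(\<lambda>k. real (Suc k choose Suc m) * x ^ (Suc k - Suc m)) sums (1 / (1 - x) ^ Suc (Suc m))"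
    by simp
  then have "(\<lambda>k. real (k choose Suc m) * x ^ (k - Suc m)) sums
      (1 / (1 - x) ^ Suc (Suc m) + real (0 choose Suc m) * x ^ (0 - Suc m))"
    by (subst sums_Suc_iff[symmetric])
  then show ?case
    by simp
qed

lemma suminf_binomial_cdf:
  fixes q :: real
  assumes q: "0 < q" "q \<le> 1"
  shows "(\<Sum>k. ennreal (\<Sum>m<n. real (k choose m) * q ^ Suc m * (1 - q) ^ (k - m))) = of_nat n"
proof -
  have "(\<lambda>k. real (k choose m) * q ^ Suc m * (1 - q) ^ (k - m)) sums 1" for m
  proof -
    have "(\<lambda>k. q ^ Suc m * (real (k choose m) * (1 - q) ^ (k - m))) sums (q ^ Suc m * (1 / (1 - (1 - q)) ^ Suc m))"
      using negative_binomial_sums[of "1 - q" m] q by (intro sums_mult) auto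
    then show ?thesis
      using q by (simp add: ac_simps)
  qed
  then have "(\<lambda>k. \<Sum>m<n. real (k choose m) * q ^ Suc m * (1 - q) ^ (k - m)) sums (\<Sum>m<n. 1)"
    by (intro sums_sum)
  moreover have "0 \<le> (\<Sum>m<n. real (k choose m) * q ^ Suc m * (1 - q) ^ (k - m))" for k
    using q by (intro sum_nonneg) auto
  ultimately show ?thesis
    by (simp add: suminf_ennreal2 sums_iff ennreal_of_nat_eq_real_of_nat)
qed

lemma nn_integral_steps_before_hits:
  fixes F :: "'a pmf" and S :: "nat \<Rightarrow> 'i set"
  assumes S: "\<And>k. finite (S k)" "\<And>k. card (S k) = k" "\<And>k. i0 \<notin> S k"
    and q: "0 < measure F A"
  shows "(\<integral>\<^sup>+ D. indicator A (D i0) * (\<Sum>k. of_bool (card {i \<in> S k. D i \<in> A} < n))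
      \<partial>PiM UNIV (\<lambda>_::'i. measure_pmf F)) = of_nat n"
proof -
  let ?M = "PiM UNIV (\<lambda>_::'i. measure_pmf F)"
  let ?E = "\<lambda>k. {D. D i0 \<in> A \<and> card {i \<in> S k. D i \<in> A} < n}"
  have "{D. D i0 \<in> A} = {D \<in> space ?M. \<forall>i\<in>{i0}. D i \<in> A}"
    by (simp add: space_PiM)
  then have origin_sets: "{D. D i0 \<in> A} \<in> sets ?M"
    using sets_PiM_pmf_cylinder[of "{i0}" F "\<lambda>_. A"] by simp
  have E_sets: "?E k \<in> sets ?M" for k
  proof -
    have "?E k = {D. D i0 \<in> A} \<inter> {D. card {i \<in> S k. D i \<in> A} < n}"
      by blast
    then show ?thesis
      using sets.Int[OF origin_sets sets_PiM_card_filter[OF S(1)]] by simp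
  qed
  have "(\<integral>\<^sup>+ D. indicator A (D i0) * (\<Sum>k. of_bool (card {i \<in> S k. D i \<in> A} < n)) \<partial>?M)
      = (\<integral>\<^sup>+ D. (\<Sum>k. indicator (?E k) D) \<partial>?M)"
  proof (rule nn_integral_cong)
    fix D :: "'i \<Rightarrow> 'a"
    have "indicator A (D i0) * of_bool (card {i \<in> S k. D i \<in> A} < n) = (indicator (?E k) D :: ennreal)"
      for k
      by (simp add: indicator_def)
    then show "indicator A (D i0) * (\<Sum>k. of_bool (card {i \<in> S k. D i \<in> A} < n)) =
        (\<Sum>k. indicator (?E k) D :: ennreal)"
      by (simp add: ennreal_suminf_cmult[symmetric])
  qed
  also have "\<dots> = (\<Sum>k. emeasure ?M (?E k))"
    using E_sets by (simp add: nn_integral_suminf)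
  also have "\<dots> = (\<Sum>k. ennreal (\<Sum>m<n. real (k choose m) * measure F A ^ Suc m
      * (1 - measure F A) ^ (k - m)))"
    by (simp only: emeasure_PiM_binomial_less[OF S(1) S(3)] S(2))
  also have "\<dots> = of_nat n"
    using q by (intro suminf_binomial_cdf) auto
  finally show ?thesis .
qed

lemma nn_integral_fair_coin_component:
  fixes f :: "bool \<Rightarrow> ennreal"
  shows "(\<integral>\<^sup>+ c. f (c j) \<partial>PiM UNIV (\<lambda>_::'i. measure_pmf (bernoulli_pmf (1/2)))) = (f True + f False) / 2"
proof -
  let ?C = "PiM UNIV (\<lambda>_::'i. measure_pmf (bernoulli_pmf (1/2)))"
  interpret product_prob_space "\<lambda>_::'i. measure_pmf (bernoulli_pmf (1/2))" UNIV
    by unfold_locales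
  have "(\<integral>\<^sup>+ c. f (c j) \<partial>?C) = (\<integral>\<^sup>+ b. f b \<partial>distr ?C (bernoulli_pmf (1/2)) (\<lambda>c. c j))"
    by (rule nn_integral_distr[symmetric]) (simp_all add: measurable_component_singleton)
  also have "\<dots> = (\<integral>\<^sup>+ b. f b \<partial>bernoulli_pmf (1/2))"
    by (simp add: PiM_component)
  also have "\<dots> = f True * ennreal (1/2) + f False * ennreal (1/2)"
    by (simp add: nn_integral_measure_pmf_finite UNIV_bool)
  also have "\<dots> = (f True + f False) / 2"
    by (simp add: ennreal_divide_numeral divide_ennreal_def distrib_right flip: divide_ennreal)
  finally show ?thesis .
qed

section \<open>Edges at the origin in the CT model\<close>

lemma count_right_Gamma:
  "count_right (Defs.Gamma D j) k = card {i \<in> {1..int k}. D i \<in> {j..}}"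
proof -
  have "{m \<in> Defs.Gamma D j. 0 < m \<and> m \<le> int k} = {i \<in> {1..int k}. D i \<in> {j..}}"
    unfolding Gamma_def by auto
  then show ?thesis
    unfolding count_right_def by simp
qed

lemma count_right_reflect_Gamma:
  "count_right (uminus ` Defs.Gamma D j) k = card {i \<in> {- int k..-1}. D i \<in> {j..}}"
proof -
  have "{m \<in> uminus ` Defs.Gamma D j. 0 < m \<and> m \<le> int k} = uminus ` {i \<in> {- int k..-1}. D i \<in> {j..}}"
    using reflect_right_segment[of "Defs.Gamma D j" "- int k"] unfolding Gamma_def by auto
  then show ?thesis
    unfolding count_right_def by (simp add: card_image)
qed

lemma points_right_0:
  assumes "j \<le> D 0"
  shows "points_right D c 0 j = c j"
proof -
  have "first_nonneg (Defs.Gamma D j) = 0"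
    unfolding first_nonneg_def Gamma_def using assms by (auto intro!: Least_equality)
  moreover have "{m \<in> Defs.Gamma D j. 0 \<le> m \<and> m < 0} = {}"
    by auto
  ultimately show ?thesis
    unfolding points_right_def stub_index_def Let_def by (simp only: order.refl if_True card.empty) simp
qed

text \<open>A left edge is measured as a right edge of the mirrored level.\<close>

definition level_length :: "nat \<Rightarrow> (int \<Rightarrow> nat) \<times> (nat \<Rightarrow> bool) \<Rightarrow> ennreal" where
  "level_length j \<omega> = indicator {j..} (fst \<omega> 0) *
     nth_right_dist (if snd \<omega> j then Defs.Gamma (fst \<omega>) j else uminus ` Defs.Gamma (fst \<omega>) j) (2 * j - 1)"

lemma level_length_eq_edge_length:
  assumes j: "1 \<le> j" "j \<le> D 0" and finite_length: "level_length j (D, c) \<noteq> \<infinity>"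
  shows "level_length j (D, c) = of_nat (nat \<bar>partner D c 0 j - 0\<bar>)"
proof -
  let ?G = "if c j then Defs.Gamma D j else uminus ` Defs.Gamma D j"
  have "partner D c 0 j = (if c j then 1 else -1) * nth_right ?G 0 (2 * j - 1)"
    unfolding partner_def points_right_0[of j D, OF j(2)] nth_left_0_eq_reflect by simp
  then have "nat \<bar>partner D c 0 j - 0\<bar> = nat \<bar>nth_right ?G 0 (2 * j - 1)\<bar>"
    by (simp add: abs_mult)
  moreover have "level_length j (D, c) = nth_right_dist ?G (2 * j - 1)"
    unfolding level_length_def using j by simp
  ultimately show ?thesis
    using nth_right_dist_eq[of "2 * j - 1" ?G] j finite_length by simp
qed

lemma borel_measurable_nth_right_dist_Gamma:
  "(\<lambda>D. nth_right_dist (Defs.Gamma D j) n) \<in> borel_measurable (PiM UNIV (\<lambda>_::int. measure_pmf F))"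
  "(\<lambda>D. nth_right_dist (uminus ` Defs.Gamma D j) n) \<in> borel_measurable (PiM UNIV (\<lambda>_::int. measure_pmf F))"
  unfolding nth_right_dist_def count_right_Gamma count_right_reflect_Gamma
  by (rule borel_measurable_suminf_card_less; simp)+

lemma borel_measurable_level_length: "level_length j \<in> borel_measurable (CT_space F)"
proof -
  note borel_measurable_nth_right_dist_Gamma[measurable] borel_measurable_indicator_component[measurable]
  have [measurable]: "(\<lambda>c. c j) \<in> PiM UNIV (\<lambda>_::nat. measure_pmf (bernoulli_pmf (1/2))) \<rightarrow>\<^sub>M count_space UNIV"
    using measurable_component_singleton[of j UNIV "\<lambda>_. measure_pmf (bernoulli_pmf (1/2))"] by simp
  have "level_length j = (\<lambda>\<omega>. indicator {j..} (fst \<omega> 0) *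
      (if snd \<omega> j then nth_right_dist (Defs.Gamma (fst \<omega>) j) (2 * j - 1)
       else nth_right_dist (uminus ` Defs.Gamma (fst \<omega>) j) (2 * j - 1)))"
    by (simp add: fun_eq_iff level_length_def)
  then show ?thesis
    unfolding CT_space_def by (simp only:) measurable
qed

lemma measure_atLeast_pos:
  assumes "finite (set_pmf F)" "j \<le> Max (set_pmf F)"
  shows "0 < measure F {j..}"
proof -
  have "Max (set_pmf F) \<in> set_pmf F"
    using assms(1) by (intro Max_in) (auto simp: set_pmf_not_empty)
  then have "0 < measure F {Max (set_pmf F)}"
    by (simp add: measure_pmf_single pmf_positive)
  also have "\<dots> \<le> measure F {j..}"
    using assms(2) by (intro measure_pmf.finite_measure_mono) auto
  finally show ?thesis .
qed

lemma nn_integral_level_length: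
  assumes F: "finite (set_pmf F)" and j: "1 \<le> j" "j \<le> Max (set_pmf F)"
  shows "(\<integral>\<^sup>+ \<omega>. level_length j \<omega> \<partial>CT_space F) = of_nat (2 * j - 1)"
proof -
  let ?D = "PiM UNIV (\<lambda>_::int. measure_pmf F)"
  let ?C = "PiM UNIV (\<lambda>_::nat. measure_pmf (bernoulli_pmf (1/2)))"
  let ?R = "\<lambda>D. indicator {j..} (D 0) * nth_right_dist (Defs.Gamma D j) (2 * j - 1)"
  let ?L = "\<lambda>D. indicator {j..} (D 0) * nth_right_dist (uminus ` Defs.Gamma D j) (2 * j - 1)"
  interpret coins: prob_space ?C
    by (intro prob_space_PiM prob_space_measure_pmf)
  note borel_measurable_nth_right_dist_Gamma[measurable] borel_measurable_indicator_component[measurable]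
  have [measurable]: "?R \<in> borel_measurable ?D"
    by measurable
  have [measurable]: "?L \<in> borel_measurable ?D"
    by measurable
  note pos = measure_atLeast_pos[OF F j(2)]
  have right: "(\<integral>\<^sup>+ D. ?R D \<partial>?D) = of_nat (2 * j - 1)"
    unfolding nth_right_dist_def count_right_Gamma
    by (rule nn_integral_steps_before_hits[where S = "\<lambda>k. {1..int k}"]) (simp_all add: pos)
  have left: "(\<integral>\<^sup>+ D. ?L D \<partial>?D) = of_nat (2 * j - 1)"
    unfolding nth_right_dist_def count_right_reflect_Gamma
    by (rule nn_integral_steps_before_hits[where S = "\<lambda>k. {- int k..-1}"]) (simp_all add: pos)
  have "(\<integral>\<^sup>+ \<omega>. level_length j \<omega> \<partial>CT_space F) = (\<integral>\<^sup>+ D. \<integral>\<^sup>+ c. level_length j (D, c) \<partial>?C \<partial>?D)"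
    unfolding CT_space_def using borel_measurable_level_length[of j F]
    by (intro coins.nn_integral_fst[symmetric]) (simp add: CT_space_def)
  also have "\<dots> = (\<integral>\<^sup>+ D. (?R D + ?L D) / 2 \<partial>?D)"
  proof (rule nn_integral_cong)
    fix D :: "int \<Rightarrow> nat"
    show "(\<integral>\<^sup>+ c. level_length j (D, c) \<partial>?C) = (?R D + ?L D) / 2"
      using nn_integral_fair_coin_component[of "\<lambda>b. indicator {j..} (D 0) *
          nth_right_dist (if b then Defs.Gamma D j else uminus ` Defs.Gamma D j) (2 * j - 1)" j]
      unfolding level_length_def fst_conv snd_conv by simp
  qed
  also have "\<dots> = ((\<integral>\<^sup>+ D. ?R D \<partial>?D) + (\<integral>\<^sup>+ D. ?L D \<partial>?D)) / 2"
    by (simp add: nn_integral_divide nn_integral_add)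
  also have "\<dots> = of_nat (2 * j - 1)"
    unfolding right left mult_2[symmetric] by (subst mult.commute) (rule ennreal_mult_divide_eq; simp)
  finally show ?thesis .
qed

lemma sum_odd_eq_square: "(\<Sum>j\<in>{1..u}. 2 * j - 1) = (u :: nat) ^ 2"
  by (induction u) (simp_all add: power2_eq_square)

lemma nn_integral_sum_level_length:
  assumes "finite (set_pmf F)"
  shows "(\<integral>\<^sup>+ \<omega>. (\<Sum>j\<in>{1..Max (set_pmf F)}. level_length j \<omega>) \<partial>CT_space F)
    = of_nat (Max (set_pmf F) ^ 2)"
proof -
  have "(\<integral>\<^sup>+ \<omega>. (\<Sum>j\<in>{1..Max (set_pmf F)}. level_length j \<omega>) \<partial>CT_space F)
      = (\<Sum>j\<in>{1..Max (set_pmf F)}. \<integral>\<^sup>+ \<omega>. level_length j \<omega> \<partial>CT_space F)"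
    by (intro nn_integral_sum borel_measurable_level_length)
  also have "\<dots> = (\<Sum>j\<in>{1..Max (set_pmf F)}. of_nat (2 * j - 1))"
    using assms by (intro sum.cong refl nn_integral_level_length) auto
  also have "\<dots> = of_nat (Max (set_pmf F) ^ 2)"
    by (simp only: sum_odd_eq_square flip: of_nat_sum)
  finally show ?thesis .
qed

lemma CT_T_eq_sum_level_length:
  assumes "D 0 \<le> u" and finite_sum: "(\<Sum>j\<in>{1..u}. level_length j (D, c)) \<noteq> \<infinity>"
  shows "ennreal (real (CT_T (D, c))) = (\<Sum>j\<in>{1..u}. level_length j (D, c))"
proof -
  have restrict: "(\<Sum>j\<in>{1..u}. level_length j (D, c)) = (\<Sum>j\<in>{1..D 0}. level_length j (D, c))"
    using assms(1) by (intro sum.mono_neutral_right) (auto simp: level_length_def)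
  have "ennreal (real (CT_T (D, c))) = (\<Sum>j\<in>{1..D 0}. of_nat (nat \<bar>partner D c 0 j - 0\<bar>))"
    unfolding CT_T_def fst_conv snd_conv ennreal_of_nat_eq_real_of_nat[symmetric] by (rule of_nat_sum)
  also have "\<dots> = (\<Sum>j\<in>{1..D 0}. level_length j (D, c))"
  proof (rule sum.cong[OF refl])
    fix j assume j: "j \<in> {1..D 0}"
    then have "level_length j (D, c) \<noteq> \<infinity>"
      using finite_sum unfolding restrict by (simp add: ennreal_sum_eq_top)
    with j show "of_nat (nat \<bar>partner D c 0 j - 0\<bar>) = level_length j (D, c)"
      by (simp add: level_length_eq_edge_length)
  qed
  finally show ?thesis
    unfolding restrict .
qed

lemma AE_CT_T_eq_sum_level_length:
  assumes "finite (set_pmf F)"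
  shows "AE \<omega> in CT_space F. ennreal (real (CT_T \<omega>)) = (\<Sum>j\<in>{1..Max (set_pmf F)}. level_length j \<omega>)"
proof -
  let ?D = "PiM UNIV (\<lambda>_::int. measure_pmf F)"
  let ?C = "PiM UNIV (\<lambda>_::nat. measure_pmf (bernoulli_pmf (1/2)))"
  interpret coins: prob_space ?C
    by (intro prob_space_PiM prob_space_measure_pmf)
  have "AE D in ?D. D 0 \<in> set_pmf F"
    by (rule AE_PiM_component) (auto simp: prob_space_measure_pmf AE_measure_pmf)
  then have "AE \<omega> in CT_space F. fst \<omega> 0 \<in> set_pmf F"
    unfolding CT_space_def by (rule AE_distrD[OF measurable_fst[of ?D ?C], unfolded coins.distr_pair_fst])
  moreover have "AE \<omega> in CT_space F. (\<Sum>j\<in>{1..Max (set_pmf F)}. level_length j \<omega>) \<noteq> \<infinity>"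
    using nn_integral_sum_level_length[OF assms]
    by (intro nn_integral_noteq_infinite borel_measurable_sum borel_measurable_level_length)
      (simp_all del: of_nat_power)
  ultimately show ?thesis
  proof eventually_elim
    case (elim \<omega>)
    obtain D c where \<omega>: "\<omega> = (D, c)"
      by fastforce
    have "D 0 \<le> Max (set_pmf F)"
      using elim(1) assms unfolding \<omega> by simp
    then show ?case
      using elim(2) unfolding \<omega> by (rule CT_T_eq_sum_level_length)
  qed
qed

theorem proposition2p1:
  fixes F :: "nat pmf"
  assumes "finite (set_pmf F)"
  shows "(\<integral>\<^sup>+ \<omega>. ennreal (real (CT_T \<omega>)) \<partial>(CT_space F))
           = ennreal (real (Max (set_pmf F) ^ 2))"
proof -
  have "(\<integral>\<^sup>+ \<omega>. ennreal (real (CT_T \<omega>)) \<partial>(CT_space F))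
      = (\<integral>\<^sup>+ \<omega>. (\<Sum>j\<in>{1..Max (set_pmf F)}. level_length j \<omega>) \<partial>CT_space F)"
    using AE_CT_T_eq_sum_level_length[OF assms] by (rule nn_integral_cong_AE)
  also have "\<dots> = of_nat (Max (set_pmf F) ^ 2)"
    using assms by (rule nn_integral_sum_level_length)
  finally show ?thesis
    by (simp add: ennreal_of_nat_eq_real_of_nat)
qed

end
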